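(* Let $k>0$ be sufficiently large and let $f_k$ be the standard map. For $z\in\mathbb T^2$ let $e^{(1)}(z)$ be the most contracted direction of $Df_k(z)$ and $e^{(-1)}(z)$ the most contracted direction of $D(f_k^{-1})(z)$. Then there is no point $z=(x,y)$ with $y\in[0,\delta^-]\cup[1-\delta^-,1]$ at which $e^{(1)}(z)$ and $e^{(-1)}(z)$ span the same line (i.e. there are no tangencies between the foliations $\mathcal E^{(1)}$ and $\mathcal E^{(-1)}$ in this region).
   Context: The standard map is $f_k(x,y)=(x+k\sin(2\pi y),\,x+y+k\sin(2\pi y))\bmod 1$ on $\mathbb T^2=\mathbb R^2/\mathbb Z^2$. For an invertible linear map $A$ with $\min_{\|v\|=1}\|Av\|<\max_{\|v\|=1}\|Av\|$, its most contracted direction is the line spanned by a unit vector minimizing $\|Av\|$; $\mathcal E^{(\pm1)}$ denote the foliations tangent to $e^{(\pm1)}$. $\delta^-=\frac1{2\pi}\cos^{-1}\!\left(\frac{\sqrt3-1}{4\pi k}\right)$ with $\cos^{-1}\in[0,\pi]$. *)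

theory Defs
  imports "HOL-Analysis.Analysis"
begin

text \<open>Lift to the plane of the standard map f_k on the torus (reduction mod 1
  does not affect derivatives; the lift is a bijection of the plane whose inverse
  lifts f_k^{-1}).\<close>
definition std_map :: "real \<Rightarrow> real \<times> real \<Rightarrow> real \<times> real" where
  "std_map k = (\<lambda>(x, y). (x + k * sin (2 * pi * y), x + y + k * sin (2 * pi * y)))"

definition most_contracted_dir :: "(real \<times> real \<Rightarrow> real \<times> real) \<Rightarrow> real \<times> real \<Rightarrow> bool" where
  "most_contracted_dir A v \<longleftrightarrow>
     linear A \<and>
     (\<exists>u1 u2. norm u1 = 1 \<and> norm u2 = 1 \<and> norm (A u1) < norm (A u2)) \<and>
     norm v = 1 \<and> (\<forall>u. norm u = 1 \<longrightarrow> norm (A v) \<le> norm (A u))"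

definition delta_minus :: "real \<Rightarrow> real" where
  "delta_minus k = arccos ((sqrt 3 - 1) / (4 * pi * k)) / (2 * pi)"

end

theory Submission
  imports Defs
begin

text \<open>For a linear map of the plane with matrix M, the most contracted direction
  (p, q) minimises the quadratic form of M^T M on the unit circle, and a minimiser
  of a form with off-diagonal entry b \<noteq> 0 satisfies b p q < 0.
  For Df_k this entry is 1 + 2c with c = 2 pi k cos (2 pi y), which is positive in the
  strips where cos (2 pi y) \<ge> 0; for the derivative of the inverse it is
  -(d^2 + d + 1) < 0. So a common direction would need p q < 0 and p q > 0.\<close>

lemma linear_plus_quadratic_nonneg_imp_zero:
  fixes b m :: real
  assumes "\<And>t. 0 \<le> 2 * b * t + m * t\<^sup>2"
  shows "b = 0"
proof (rule ccontr)
  assume "b \<noteq> 0"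
  define M where "M = \<bar>m\<bar> + 1"
  have M: "M > 0" "m - 2 * M < 0"
    unfolding M_def by (simp_all add: abs_if)
  have "2 * b * (- b / M) + m * (- b / M)\<^sup>2 = b\<^sup>2 / M\<^sup>2 * (m - 2 * M)"
    using M by (simp add: field_simps power2_eq_square)
  also have "\<dots> < 0"
    using \<open>b \<noteq> 0\<close> M by (intro mult_pos_neg) auto
  finally show False
    using assms[of "- b / M"] by linarith
qed

lemma quadratic_form_unit_minimiser_sign:
  fixes a b e p q :: real
  assumes unit: "p\<^sup>2 + q\<^sup>2 = 1"
    and min: "\<And>s t. (a * p\<^sup>2 + 2 * b * p * q + e * q\<^sup>2) * (s\<^sup>2 + t\<^sup>2)
                      \<le> a * s\<^sup>2 + 2 * b * s * t + e * t\<^sup>2"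
    and "b \<noteq> 0"
  shows "b * p * q < 0"
proof -
  have "b * p * q \<le> 0"
    using min[of p "- q"] unit by (simp add: algebra_simps)
  moreover have "p * q \<noteq> 0"
  proof
    assume "p * q = 0"
    then consider "q = 0" "p\<^sup>2 = 1" | "p = 0" "q\<^sup>2 = 1"
      using unit by fastforce
    then show False
    proof cases
      case 1
      have "0 \<le> 2 * (b * p) * t + (e - a) * t\<^sup>2" for t
        using min[of p t] 1 by (simp add: algebra_simps)
      then have "b * p = 0"
        by (rule linear_plus_quadratic_nonneg_imp_zero)
      with 1 \<open>b \<noteq> 0\<close> show False by auto
    next
      case 2
      have "0 \<le> 2 * (b * q) * s + (a - e) * s\<^sup>2" for s
        using min[of s q] 2 by (simp add: algebra_simps)
      then have "b * q = 0"
        by (rule linear_plus_quadratic_nonneg_imp_zero)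
      with 2 \<open>b \<noteq> 0\<close> show False by auto
    qed
  qed
  ultimately show ?thesis
    using \<open>b \<noteq> 0\<close> by (auto simp: le_less)
qed

lemma most_contracted_dir_norm_le:
  assumes "most_contracted_dir A v"
  shows "(norm (A v))\<^sup>2 * (norm u)\<^sup>2 \<le> (norm (A u))\<^sup>2"
proof (cases "u = 0")
  case True
  with assms show ?thesis
    by (simp add: most_contracted_dir_def linear_0)
next
  case False
  have lin: "linear A" and min: "\<And>u. norm u = 1 \<Longrightarrow> norm (A v) \<le> norm (A u)"
    using assms unfolding most_contracted_dir_def by auto
  have "norm (A v) \<le> norm (A (u /\<^sub>R norm u))"
    using False by (intro min) simp
  also have "\<dots> = norm (A u) / norm u"
    using lin by (simp add: linear_scale divide_inverse)
  finally have "norm (A v) * norm u \<le> norm (A u)"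
    using False by (simp add: field_simps)
  then have "(norm (A v) * norm u)\<^sup>2 \<le> (norm (A u))\<^sup>2"
    by (simp add: power_mono)
  then show ?thesis
    by (simp add: power_mult_distrib)
qed

lemma most_contracted_dir_matrix_sign:
  fixes \<alpha> \<beta> \<gamma> \<delta> p q :: real
  assumes "most_contracted_dir (\<lambda>h. (\<alpha> * fst h + \<beta> * snd h, \<gamma> * fst h + \<delta> * snd h)) (p, q)"
    and "\<alpha> * \<beta> + \<gamma> * \<delta> \<noteq> 0"
  shows "(\<alpha> * \<beta> + \<gamma> * \<delta>) * p * q < 0"
proof (rule quadratic_form_unit_minimiser_sign)
  have norm_sq: "(norm (s, t))\<^sup>2 = s\<^sup>2 + t\<^sup>2" for s t :: real
    by (simp add: norm_Pair)
  show "p\<^sup>2 + q\<^sup>2 = 1"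
    using assms(1) norm_sq[of p q] unfolding most_contracted_dir_def by simp
  show "((\<alpha>\<^sup>2 + \<gamma>\<^sup>2) * p\<^sup>2 + 2 * (\<alpha> * \<beta> + \<gamma> * \<delta>) * p * q + (\<beta>\<^sup>2 + \<delta>\<^sup>2) * q\<^sup>2) * (s\<^sup>2 + t\<^sup>2)
        \<le> (\<alpha>\<^sup>2 + \<gamma>\<^sup>2) * s\<^sup>2 + 2 * (\<alpha> * \<beta> + \<gamma> * \<delta>) * s * t + (\<beta>\<^sup>2 + \<delta>\<^sup>2) * t\<^sup>2" for s t
    using most_contracted_dir_norm_le[OF assms(1), of "(s, t)"]
    unfolding norm_sq by (simp add: power2_eq_square algebra_simps)
qed (fact assms(2))

lemma most_contracted_dirs_opposite_sign_not_parallel: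
  fixes \<alpha> \<beta> \<gamma> \<delta> \<alpha>' \<beta>' \<gamma>' \<delta>' :: real
  assumes v: "most_contracted_dir (\<lambda>h. (\<alpha> * fst h + \<beta> * snd h, \<gamma> * fst h + \<delta> * snd h)) v"
    and w: "most_contracted_dir (\<lambda>h. (\<alpha>' * fst h + \<beta>' * snd h, \<gamma>' * fst h + \<delta>' * snd h)) w"
    and pos: "0 < \<alpha> * \<beta> + \<gamma> * \<delta>" and neg: "\<alpha>' * \<beta>' + \<gamma>' * \<delta>' < 0"
  shows "span {v} \<noteq> span {w}"
proof
  assume same: "span {v} = span {w}"
  obtain p q where pq: "v = (p, q)" by fastforce
  obtain p' q' where pq': "w = (p', q')" by fastforce
  have "(\<alpha> * \<beta> + \<gamma> * \<delta>) * p * q < 0"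
    using pos by (intro most_contracted_dir_matrix_sign v[unfolded pq]) simp
  with pos have "p * q < 0"
    by (simp add: mult_less_0_iff mult.assoc)
  have "(\<alpha>' * \<beta>' + \<gamma>' * \<delta>') * p' * q' < 0"
    using neg by (intro most_contracted_dir_matrix_sign w[unfolded pq']) simp
  with neg have "0 < p' * q'"
    by (simp add: mult_less_0_iff mult.assoc)
  obtain t where "w = t *\<^sub>R v"
    using same span_base[of w "{w}"] by (auto simp: span_singleton)
  then have "p' * q' = t\<^sup>2 * (p * q)"
    unfolding pq pq' by (simp add: power2_eq_square)
  with \<open>p * q < 0\<close> \<open>0 < p' * q'\<close> show False
    using mult_nonneg_nonpos[of "t\<^sup>2" "p * q"] by simp
qed

definition std_map_inv :: "real \<Rightarrow> real \<times> real \<Rightarrow> real \<times> real" where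
  "std_map_inv k = (\<lambda>(x, y). (x - k * sin (2 * pi * (y - x)), y - x))"

lemma inv_std_map: "inv (std_map k) = std_map_inv k"
  by (rule inv_equality) (auto simp: std_map_def std_map_inv_def split: prod.splits)

lemma std_map_has_derivative:
  fixes k x y :: real
  defines "c \<equiv> 2 * pi * k * cos (2 * pi * y)"
  shows "(std_map k has_derivative
           (\<lambda>h. (fst h + c * snd h, fst h + (1 + c) * snd h))) (at (x, y))"
proof -
  have "std_map k = (\<lambda>z. (fst z + k * sin (2 * pi * snd z),
                          fst z + snd z + k * sin (2 * pi * snd z)))"
    unfolding std_map_def by auto
  then show ?thesis
    unfolding c_def by (auto intro!: derivative_eq_intros simp: algebra_simps)
qed

lemma std_map_inv_has_derivative:
  fixes k x y :: real
  defines "d \<equiv> 2 * pi * k * cos (2 * pi * (y - x))"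
  shows "(std_map_inv k has_derivative
           (\<lambda>h. ((1 + d) * fst h - d * snd h, snd h - fst h))) (at (x, y))"
proof -
  have "std_map_inv k = (\<lambda>z. (fst z - k * sin (2 * pi * (snd z - fst z)), snd z - fst z))"
    unfolding std_map_inv_def by auto
  then show ?thesis
    unfolding d_def by (auto intro!: derivative_eq_intros simp: algebra_simps)
qed

lemma delta_minus_le_quarter:
  assumes "1 \<le> k"
  shows "delta_minus k \<le> 1 / 4"
proof -
  define r where "r = (sqrt 3 - 1) / (4 * pi * k)"
  have "1 \<le> sqrt 3" "sqrt 3 \<le> 2"
    by (simp_all add: real_le_rsqrt real_le_lsqrt)
  moreover have "4 \<le> 4 * pi * k"
    using assms pi_ge_two mult_mono[of 1 pi 1 k] by simp
  ultimately have "0 \<le> r" "r \<le> 1"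
    unfolding r_def using assms by (simp_all add: divide_le_eq)
  then have "arccos r \<le> pi / 2"
    by (rule arccos_le_pi2)
  then show ?thesis
    unfolding delta_minus_def r_def[symmetric] by (simp add: divide_le_eq)
qed

lemma cos_nonneg_near_integer:
  fixes y :: real
  assumes "y \<in> {0..1/4} \<union> {3/4..1}"
  shows "0 \<le> cos (2 * pi * y)"
  using assms
proof
  assume "y \<in> {0..1/4}"
  then have "0 \<le> pi * y" "pi * y \<le> pi * (1/4)"
    by (simp_all add: mult_left_mono)
  then have "0 \<le> 2 * pi * y" "2 * pi * y \<le> pi / 2"
    by linarith+
  then show ?thesis
    by (intro cos_ge_zero) linarith+
next
  assume "y \<in> {3/4..1}"
  then have "pi * (3/4) \<le> pi * y" "pi * y \<le> pi * 1"
    by (simp_all add: mult_left_mono)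
  then have "- (pi / 2) \<le> 2 * pi * y - 2 * pi" "2 * pi * y - 2 * pi \<le> 0"
    by linarith+
  then have "0 \<le> cos (2 * pi * y - 2 * pi)"
    by (intro cos_ge_zero) linarith+
  then show ?thesis
    by (simp add: cos_diff)
qed

theorem mainTheorem7:
  shows "\<exists>K>0. \<forall>k\<ge>K. \<forall>x y Df Dg v w.
     y \<in> {0..delta_minus k} \<union> {1 - delta_minus k..1} \<longrightarrow>
     (std_map k has_derivative Df) (at (x, y)) \<longrightarrow>
     (inv (std_map k) has_derivative Dg) (at (x, y)) \<longrightarrow>
     most_contracted_dir Df v \<longrightarrow>
     most_contracted_dir Dg w \<longrightarrow>
     span {v} \<noteq> span {w}"
proof (intro exI[of _ 1] conjI allI impI notI)
  fix k x y Df Dg v w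
  assume k: "1 \<le> (k::real)"
    and y: "y \<in> {0..delta_minus k} \<union> {1 - delta_minus k..1}"
    and "(std_map k has_derivative Df) (at (x, y))"
    and "(inv (std_map k) has_derivative Dg) (at (x, y))"
    and mv: "most_contracted_dir Df v" and mw: "most_contracted_dir Dg w"
    and same: "span {v} = span {w}"
  define c where "c = 2 * pi * k * cos (2 * pi * y)"
  define d where "d = 2 * pi * k * cos (2 * pi * (y - x))"
  have Df: "Df = (\<lambda>h. (1 * fst h + c * snd h, 1 * fst h + (1 + c) * snd h))"
    using has_derivative_unique[OF \<open>(std_map k has_derivative Df) _\<close> std_map_has_derivative]
    unfolding c_def by simp
  have Dg: "Dg = (\<lambda>h. ((1 + d) * fst h + (- d) * snd h, (- 1) * fst h + 1 * snd h))"
    using has_derivative_unique[OF \<open>(inv (std_map k) has_derivative Dg) _\<close>[unfolded inv_std_map]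
        std_map_inv_has_derivative]
    unfolding d_def by simp
  have "0 \<le> cos (2 * pi * y)"
    using y delta_minus_le_quarter[OF k] by (intro cos_nonneg_near_integer) auto
  then have "0 \<le> c"
    unfolding c_def using k by simp
  moreover have "0 < (d + 1/2)\<^sup>2 + 3/4"
    by (simp add: add_nonneg_pos)
  ultimately show False
    using most_contracted_dirs_opposite_sign_not_parallel[OF mv[unfolded Df] mw[unfolded Dg]] same
    by (simp add: power2_eq_square algebra_simps)
qed simp

end
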